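(* Let $\epsilon>0$ and $\delta>0$ be arbitrary, and consider the open subset $B(\epsilon)\times\mathbb D_{<\delta}(T^*S^1)$ of $(\mathbb R^3\times T^*S^1,\ker(\alpha_{\mathrm{OT}}+\lambda_{\mathrm{can}}))$, a neighborhood of $\mathbb D_{\mathrm{OT}}\times S^1$. Then for every $C>0$ there is an embedding of the hypersurface $S_C=\mathbb D^2_{\le\pi}\times(-C,C)\times(-\tfrac{\delta}{2},\tfrac{\delta}{2})$ into $B(\epsilon)\times\mathbb D_{<\delta}(T^*S^1)$ such that the contact structure induces on $S_C$ the singular distribution $\ker(r\sin r\,d\vartheta-t\,ds)$, where $(r,\vartheta)$ are polar coordinates on the disk and $(s,t)$ are the coordinates on $(-C,C)\times(-\tfrac\delta2,\tfrac\delta2)$.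
   Context: $\alpha_{\mathrm{OT}}=\cos r\,dz+r\sin r\,d\vartheta$ on $\mathbb R^3$ in cylindrical coordinates $(r,\vartheta,z)$; $\mathbb D_{\mathrm{OT}}=\{r\le\pi,z=0\}$. Fix a small $\delta_0>0$ and set $B(h)=\mathbb D^2_{<\pi+\delta_0}\times(-h,h)\subset\mathbb R^3$ for $h>0$ (a cylindrical box around $\mathbb D_{\mathrm{OT}}$). On $T^*S^1$ use coordinates $(q,p)$, $q\in\mathbb R/2\pi\mathbb Z$, with $\lambda_{\mathrm{can}}=-p\,dq$, and $\mathbb D_{<\delta}(T^*S^1)=\{|p|<\delta\}$. The induced singular distribution of an embedding $\iota$ is $(D\iota)^{-1}(\xi)$ (the kernel of a vanishing form is the whole tangent space). *)

theory Defs
  imports "HOL-Analysis.Analysis"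
begin

fun Ck_on :: "nat \<Rightarrow> 'a::euclidean_space set \<Rightarrow> ('a \<Rightarrow> 'b::euclidean_space) \<Rightarrow> bool" where
  "Ck_on 0 U f = continuous_on U f"
| "Ck_on (Suc k) U f = (\<exists>f'. (\<forall>x\<in>U. (f has_derivative f' x) (at x)) \<and> (\<forall>v. Ck_on k U (\<lambda>x. f' x v)))"

definition smooth_open :: "'a::euclidean_space set \<Rightarrow> ('a \<Rightarrow> 'b::euclidean_space) \<Rightarrow> bool" where
  "smooth_open U f \<longleftrightarrow> open U \<and> (\<forall>k. Ck_on k U f)"

definition sinc :: "real \<Rightarrow> real" where
  "sinc r = (if r = 0 then 1 else sin r / r)"

(* Points of R^3 x T^*S^1, lifted to the universal cover: (x,y,z,q,p), q \<in> R.
   alpha_OT + lambda_can = cos r dz + r sin r d\<theta> - p dq, written in Cartesian coordinates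
   (r sin r d\<theta> = (sin r / r)(x dy - y dx)). *)
definition contact_form :: "real \<times> real \<times> real \<times> real \<times> real \<Rightarrow> real \<times> real \<times> real \<times> real \<times> real \<Rightarrow> real" where
  "contact_form P V = (case P of (x,y,z,q,p) \<Rightarrow> case V of (X,Y,Z,Q,PP) \<Rightarrow>
      (let r = sqrt (x\<^sup>2 + y\<^sup>2) in cos r * Z + sinc r * (x * Y - y * X) - p * Q))"

(* projection from the lift to R^3 x T^*S^1, with S^1 = unit circle in C, q \<mapsto> cis q *)
definition proj_TS1 :: "real \<times> real \<times> real \<times> real \<times> real \<Rightarrow> real \<times> real \<times> real \<times> complex \<times> real" where
  "proj_TS1 P = (case P of (x,y,z,q,p) \<Rightarrow> (x,y,z,cis q,p))"

(* lift of B(\<epsilon>) x D_{<\<delta>}(T^*S^1), with B(h) = D^2_{<\<pi>+\<delta>0} x (-h,h) *)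
definition target_set :: "real \<Rightarrow> real \<Rightarrow> real \<Rightarrow> (real \<times> real \<times> real \<times> real \<times> real) set" where
  "target_set \<delta>0 \<epsilon> \<delta> = {(x,y,z,q,p). x\<^sup>2 + y\<^sup>2 < (pi + \<delta>0)\<^sup>2 \<and> \<bar>z\<bar> < \<epsilon> \<and> \<bar>p\<bar> < \<delta>}"

definition S_C :: "real \<Rightarrow> real \<Rightarrow> (real \<times> real \<times> real \<times> real) set" where
  "S_C C \<delta> = {(u,v,s,t). u\<^sup>2 + v\<^sup>2 \<le> pi\<^sup>2 \<and> -C < s \<and> s < C \<and> -(\<delta>/2) < t \<and> t < \<delta>/2}"

(* r sin r d\<theta> - t ds in Cartesian coordinates *)
definition beta_form :: "real \<times> real \<times> real \<times> real \<Rightarrow> real \<times> real \<times> real \<times> real \<Rightarrow> real" where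
  "beta_form W V = (case W of (u,v,s,t) \<Rightarrow> case V of (U,VV,SS,T) \<Rightarrow>
      sinc (sqrt (u\<^sup>2 + v\<^sup>2)) * (u * VV - v * U) - t * SS)"

end

theory Submission imports Defs begin

text \<open>The embedding is (u, v, s, t) \<mapsto> (u, v, k s, s, t + k cos r) for a small k > 0. Since the
  fibre coordinate q equals s, the pull-back of cos r dz - p dq is k cos r ds - (t + k cos r) ds
  = -t ds, while r sin r d\<theta> pulls back to itself; k is chosen so that |z| = k |s| < \<epsilon> and
  |p| < \<delta>. Smoothness of cos r in the Cartesian coordinates (u, v) holds because cos r is an
  entire power series in r^2 = u^2 + v^2.\<close>

definition power_series_fun :: "(nat \<Rightarrow> real) \<Rightarrow> real \<Rightarrow> real" where
  "power_series_fun c w = (\<Sum>n. c n * w ^ n)"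

definition entire_coeffs :: "(nat \<Rightarrow> real) \<Rightarrow> bool" where
  "entire_coeffs c \<longleftrightarrow> (\<forall>w. summable (\<lambda>n. c n * w ^ n))"

lemma entire_coeffs_diffs: "entire_coeffs c \<Longrightarrow> entire_coeffs (diffs c)"
  unfolding entire_coeffs_def by (simp add: termdiff_converges_all)

lemma power_series_fun_has_real_derivative:
  "entire_coeffs c \<Longrightarrow> (power_series_fun c has_real_derivative power_series_fun (diffs c) w) (at w)"
  unfolding entire_coeffs_def power_series_fun_def[abs_def]
  by (rule termdiffs_strong_converges_everywhere) simp

lemma continuous_on_power_series_fun [continuous_intros]:
  assumes "entire_coeffs c" "continuous_on A f"
  shows "continuous_on A (\<lambda>x. power_series_fun c (f x))"
proof -
  have "continuous_on UNIV (power_series_fun c)"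
    using power_series_fun_has_real_derivative[OF assms(1)]
    by (meson DERIV_isCont continuous_at_imp_continuous_on)
  then show ?thesis
    using assms(2) by (rule continuous_on_compose2) auto
qed

definition cos_sqrt_coeffs :: "nat \<Rightarrow> real" where
  "cos_sqrt_coeffs n = (-1) ^ n / fact (2 * n)"

lemma entire_cos_sqrt_coeffs: "entire_coeffs cos_sqrt_coeffs"
  unfolding entire_coeffs_def
proof
  fix w :: real
  have "norm (cos_sqrt_coeffs n * w ^ n) \<le> inverse (fact n) * \<bar>w\<bar> ^ n" for n
  proof -
    have "inverse (fact (2 * n)) \<le> (inverse (fact n) :: real)"
      by (simp add: le_imp_inverse_le fact_mono)
    then show ?thesis
      by (simp add: cos_sqrt_coeffs_def abs_mult power_abs divide_inverse mult_right_mono)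
  qed
  then show "summable (\<lambda>n. cos_sqrt_coeffs n * w ^ n)"
    by (intro summable_comparison_test[OF _ summable_exp[of "\<bar>w\<bar>"]]) auto
qed

lemma power_series_fun_cos_sqrt:
  assumes "0 \<le> w"
  shows "power_series_fun cos_sqrt_coeffs w = cos (sqrt w)"
proof -
  have "(sqrt w) ^ (2 * n) = w ^ n" for n
    using assms by (simp add: power_mult)
  then have "(\<lambda>n. cos_sqrt_coeffs n * w ^ n) sums cos (sqrt w)"
    using cos_paired[of "sqrt w"] by (simp add: cos_sqrt_coeffs_def)
  then show ?thesis
    by (simp add: power_series_fun_def sums_iff)
qed

inductive_set smooth_algebra :: "('a::real_normed_vector \<Rightarrow> real) set" where
  const: "(\<lambda>x. c) \<in> smooth_algebra"
| linear: "bounded_linear l \<Longrightarrow> l \<in> smooth_algebra"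
| add: "f \<in> smooth_algebra \<Longrightarrow> g \<in> smooth_algebra \<Longrightarrow> (\<lambda>x. f x + g x) \<in> smooth_algebra"
| mult: "f \<in> smooth_algebra \<Longrightarrow> g \<in> smooth_algebra \<Longrightarrow> (\<lambda>x. f x * g x) \<in> smooth_algebra"
| power_series: "entire_coeffs c \<Longrightarrow> f \<in> smooth_algebra \<Longrightarrow>
    (\<lambda>x. power_series_fun c (f x)) \<in> smooth_algebra"

lemma smooth_algebra_has_derivative:
  assumes "f \<in> smooth_algebra"
  shows "\<exists>f'. (\<forall>x. (f has_derivative f' x) (at x)) \<and> (\<forall>v. (\<lambda>x. f' x v) \<in> smooth_algebra)"
  using assms
proof (induction rule: smooth_algebra.induct)
  case (const c)
  show ?case
    by (rule exI[of _ "\<lambda>x v. 0"]) (auto intro: smooth_algebra.const)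
next
  case (linear l)
  then show ?case
    by (intro exI[of _ "\<lambda>x. l"]) (auto intro: smooth_algebra.const bounded_linear_imp_has_derivative)
next
  case (add f g)
  then obtain f' g' where "\<forall>x. (f has_derivative f' x) (at x)" "\<forall>v. (\<lambda>x. f' x v) \<in> smooth_algebra"
    and "\<forall>x. (g has_derivative g' x) (at x)" "\<forall>v. (\<lambda>x. g' x v) \<in> smooth_algebra" by blast
  then show ?case
    by (intro exI[of _ "\<lambda>x v. f' x v + g' x v"]) (auto intro!: smooth_algebra.add has_derivative_add)
next
  case (mult f g)
  then obtain f' g' where "\<forall>x. (f has_derivative f' x) (at x)" "\<forall>v. (\<lambda>x. f' x v) \<in> smooth_algebra"
    and "\<forall>x. (g has_derivative g' x) (at x)" "\<forall>v. (\<lambda>x. g' x v) \<in> smooth_algebra" by blast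
  with mult.hyps show ?case
    by (intro exI[of _ "\<lambda>x v. f x * g' x v + f' x v * g x"])
      (auto intro!: smooth_algebra.add smooth_algebra.mult has_derivative_mult)
next
  case (power_series c f)
  then obtain f' where f': "\<forall>x. (f has_derivative f' x) (at x)" "\<forall>v. (\<lambda>x. f' x v) \<in> smooth_algebra"
    by blast
  have "((\<lambda>x. power_series_fun c (f x)) has_derivative
      (\<lambda>v. power_series_fun (diffs c) (f x) * f' x v)) (at x)" for x
    using DERIV_compose_FDERIV[OF power_series_fun_has_real_derivative f'(1)[rule_format]]
      power_series.hyps by (simp add: mult.commute)
  with f' power_series.hyps show ?case
    by (intro exI[of _ "\<lambda>x v. power_series_fun (diffs c) (f x) * f' x v"])
      (auto intro!: smooth_algebra.mult smooth_algebra.power_series entire_coeffs_diffs)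
qed

lemma smooth_algebra_Ck_on:
  fixes f :: "'a::euclidean_space \<Rightarrow> real"
  shows "f \<in> smooth_algebra \<Longrightarrow> Ck_on k U f"
proof (induction k arbitrary: f)
  case 0
  then obtain f' where "\<forall>x. (f has_derivative f' x) (at x)"
    using smooth_algebra_has_derivative by blast
  then show ?case
    by (auto intro!: continuous_at_imp_continuous_on has_derivative_continuous)
next
  case (Suc k)
  then obtain f' where "\<forall>x. (f has_derivative f' x) (at x)" "\<forall>v. (\<lambda>x. f' x v) \<in> smooth_algebra"
    using smooth_algebra_has_derivative by blast
  with Suc.IH show ?case
    by auto
qed

lemma Ck_on_Pair: "Ck_on k U f \<Longrightarrow> Ck_on k U g \<Longrightarrow> Ck_on k U (\<lambda>x. (f x, g x))"
proof (induction k arbitrary: f g)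
  case 0
  then show ?case
    by (auto intro: continuous_on_Pair)
next
  case (Suc k)
  then obtain f' g' where "\<forall>x\<in>U. (f has_derivative f' x) (at x)" "\<forall>v. Ck_on k U (\<lambda>x. f' x v)"
    and "\<forall>x\<in>U. (g has_derivative g' x) (at x)" "\<forall>v. Ck_on k U (\<lambda>x. g' x v)" by auto
  with Suc.IH show ?case
    by (auto intro!: exI[of _ "\<lambda>x v. (f' x v, g' x v)"] has_derivative_Pair)
qed

definition disk_radius_sq :: "real \<times> real \<times> real \<times> real \<Rightarrow> real" where
  "disk_radius_sq w = (fst w)\<^sup>2 + (fst (snd w))\<^sup>2"

definition hypersurface_embedding ::
    "real \<Rightarrow> real \<times> real \<times> real \<times> real \<Rightarrow> real \<times> real \<times> real \<times> real \<times> real" where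
  "hypersurface_embedding k w = (fst w, fst (snd w), k * fst (snd (snd w)), fst (snd (snd w)),
     snd (snd (snd w)) + k * power_series_fun cos_sqrt_coeffs (disk_radius_sq w))"

lemma smooth_hypersurface_embedding: "smooth_open UNIV (hypersurface_embedding k)"
proof -
  have coords: "(\<lambda>w::real \<times> real \<times> real \<times> real. fst w) \<in> smooth_algebra"
    "(\<lambda>w::real \<times> real \<times> real \<times> real. fst (snd w)) \<in> smooth_algebra"
    "(\<lambda>w::real \<times> real \<times> real \<times> real. fst (snd (snd w))) \<in> smooth_algebra"
    "(\<lambda>w::real \<times> real \<times> real \<times> real. snd (snd (snd w))) \<in> smooth_algebra"
    by (auto intro!: smooth_algebra.linear bounded_linear_fst bounded_linear_snd
        bounded_linear_compose[OF bounded_linear_fst] bounded_linear_compose[OF bounded_linear_snd])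
  have "disk_radius_sq \<in> smooth_algebra"
    unfolding disk_radius_sq_def[abs_def] power2_eq_square
    by (intro smooth_algebra.add smooth_algebra.mult coords)
  then have "(\<lambda>w. snd (snd (snd w)) + k * power_series_fun cos_sqrt_coeffs (disk_radius_sq w))
      \<in> smooth_algebra"
    by (intro smooth_algebra.add smooth_algebra.mult smooth_algebra.const
        smooth_algebra.power_series entire_cos_sqrt_coeffs coords)
  moreover have "(\<lambda>w::real \<times> real \<times> real \<times> real. k * fst (snd (snd w))) \<in> smooth_algebra"
    by (intro smooth_algebra.mult smooth_algebra.const coords)
  ultimately show ?thesis
    unfolding smooth_open_def hypersurface_embedding_def[abs_def]
    by (intro conjI allI open_UNIV Ck_on_Pair smooth_algebra_Ck_on coords)
qed

lemma hypersurface_embedding_image: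
  assumes "0 < \<delta>0" "0 < k" "k * C < \<epsilon>" "k < \<delta> / 2"
  shows "hypersurface_embedding k ` S_C C \<delta> \<subseteq> target_set \<delta>0 \<epsilon> \<delta>"
proof (rule image_subsetI)
  fix w
  assume "w \<in> S_C C \<delta>"
  moreover obtain u v s t where w_def: "w = (u, v, s, t)"
    by (cases w)
  ultimately have w: "u\<^sup>2 + v\<^sup>2 \<le> pi\<^sup>2" "\<bar>s\<bar> < C" "\<bar>t\<bar> < \<delta> / 2"
    by (auto simp: S_C_def)
  have "pi\<^sup>2 < (pi + \<delta>0)\<^sup>2"
    using assms(1) by (simp add: power_strict_mono)
  moreover have "\<bar>k * s\<bar> < \<epsilon>"
  proof -
    have "\<bar>k * s\<bar> < k * C"
      using w(2) assms(2) by (simp add: abs_mult)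
    with assms(3) show ?thesis by linarith
  qed
  moreover have "\<bar>k * cos (sqrt (u\<^sup>2 + v\<^sup>2))\<bar> \<le> k"
    using assms(2) by (simp add: abs_mult mult_left_le)
  ultimately show "hypersurface_embedding k w \<in> target_set \<delta>0 \<epsilon> \<delta>"
    using w w_def assms(4)
    by (auto simp: hypersurface_embedding_def target_set_def disk_radius_sq_def power_series_fun_cos_sqrt)
qed

lemma homeomorphism_proj_hypersurface_embedding:
  assumes "k \<noteq> 0"
  shows "\<exists>h. homeomorphism S ((proj_TS1 \<circ> hypersurface_embedding k) ` S)
    (proj_TS1 \<circ> hypersurface_embedding k) h"
proof -
  let ?f = "proj_TS1 \<circ> hypersurface_embedding k"
  define h :: "real \<times> real \<times> real \<times> complex \<times> real \<Rightarrow> real \<times> real \<times> real \<times> real" where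
    "h y = (fst y, fst (snd y), fst (snd (snd y)) / k,
      snd (snd (snd (snd y))) - k * power_series_fun cos_sqrt_coeffs ((fst y)\<^sup>2 + (fst (snd y))\<^sup>2))"
    for y
  have f: "?f = (\<lambda>w. (fst w, fst (snd w), k * fst (snd (snd w)), cis (fst (snd (snd w))),
      snd (snd (snd w)) + k * power_series_fun cos_sqrt_coeffs (disk_radius_sq w)))"
    by (auto simp: hypersurface_embedding_def proj_TS1_def case_prod_unfold)
  have "continuous_on S ?f" "continuous_on (?f ` S) h"
    using assms unfolding f h_def disk_radius_sq_def
    by (auto intro!: continuous_intros entire_cos_sqrt_coeffs)
  moreover have "h (?f w) = w" for w
    using assms by (simp add: f h_def disk_radius_sq_def)
  ultimately have "homeomorphism S (?f ` S) ?f h"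
    by (intro homeomorphismI) auto
  then show ?thesis by blast
qed

lemma hypersurface_embedding_pullback:
  assumes "k \<noteq> 0"
  obtains L where "(hypersurface_embedding k has_derivative L) (at w)" "inj L"
    "\<And>V. contact_form (hypersurface_embedding k w) (L V) = beta_form w V"
proof
  define dr where "dr V = 2 * fst w * fst V + 2 * fst (snd w) * fst (snd V)" for V :: "real \<times> real \<times> real \<times> real"
  define c' where "c' = power_series_fun (diffs cos_sqrt_coeffs) (disk_radius_sq w)"
  define L where "L V = (fst V, fst (snd V), k * fst (snd (snd V)), fst (snd (snd V)),
    snd (snd (snd V)) + k * (dr V * c'))" for V
  have "(disk_radius_sq has_derivative dr) (at w)"
    unfolding disk_radius_sq_def[abs_def] dr_def[abs_def]
    by (auto intro!: derivative_eq_intros simp: algebra_simps)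
  then have "((\<lambda>w. power_series_fun cos_sqrt_coeffs (disk_radius_sq w)) has_derivative
      (\<lambda>V. dr V * c')) (at w)"
    unfolding c'_def
    by (rule DERIV_compose_FDERIV[OF power_series_fun_has_real_derivative[OF entire_cos_sqrt_coeffs]])
  then show "(hypersurface_embedding k has_derivative L) (at w)"
    unfolding hypersurface_embedding_def[abs_def] L_def[abs_def]
    by (auto intro!: derivative_eq_intros)
  show "inj L"
    using assms by (auto simp: inj_def L_def dr_def prod_eq_iff)
  show "contact_form (hypersurface_embedding k w) (L V) = beta_form w V" for V
    by (simp add: hypersurface_embedding_def L_def contact_form_def beta_form_def disk_radius_sq_def
        power_series_fun_cos_sqrt case_prod_unfold Let_def algebra_simps)
qed

theorem mainTheorem3:
  fixes \<delta>0 \<epsilon> \<delta> C :: real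
  assumes "\<delta>0 > 0" "\<epsilon> > 0" "\<delta> > 0" "C > 0"
  shows "\<exists>U g. smooth_open U (g :: real \<times> real \<times> real \<times> real \<Rightarrow> real \<times> real \<times> real \<times> real \<times> real)
      \<and> S_C C \<delta> \<subseteq> U
      \<and> g ` S_C C \<delta> \<subseteq> target_set \<delta>0 \<epsilon> \<delta>
      \<and> (\<exists>h. homeomorphism (S_C C \<delta>) ((proj_TS1 \<circ> g) ` S_C C \<delta>) (proj_TS1 \<circ> g) h)
      \<and> (\<forall>w\<in>S_C C \<delta>. \<exists>L. (g has_derivative L) (at w) \<and> inj L
            \<and> (\<forall>V. contact_form (g w) (L V) = 0 \<longleftrightarrow> beta_form w V = 0))"
proof -
  define k where "k = min (\<epsilon> / (2 * C)) (\<delta> / 4)"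
  have "0 < k"
    using assms by (simp add: k_def)
  moreover have "k * C < \<epsilon>"
  proof -
    have "k * C \<le> \<epsilon> / (2 * C) * C"
      using assms by (intro mult_right_mono) (auto simp: k_def)
    with assms show ?thesis by simp
  qed
  moreover have "k < \<delta> / 2"
    using assms by (simp add: k_def)
  ultimately have "hypersurface_embedding k ` S_C C \<delta> \<subseteq> target_set \<delta>0 \<epsilon> \<delta>"
    using assms(1) by (intro hypersurface_embedding_image)
  moreover have "\<exists>L. (hypersurface_embedding k has_derivative L) (at w) \<and> inj L
      \<and> (\<forall>V. contact_form (hypersurface_embedding k w) (L V) = 0 \<longleftrightarrow> beta_form w V = 0)" for w
    using hypersurface_embedding_pullback[of k w] \<open>0 < k\<close> by (metis less_irrefl)
  ultimately show ?thesis
    using smooth_hypersurface_embedding homeomorphism_proj_hypersurface_embedding \<open>0 < k\<close>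
    by (intro exI[of _ UNIV] exI[of _ "hypersurface_embedding k"]) auto
qed

end
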